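(* Let $c\in\,]0,1[$ and $r=1-c$. For every real $t\ge 1$: (i) for all $\lambda\in[0,r]$, $\lambda^{2t}\le \lambda e^{-ct}$; (ii) for all $\lambda\in[r,1]$, $\lambda^{2t}\le e^{(\lambda-1)t}-e^{-ct}+\lambda e^{-ct}$; (iii) for all $\lambda\in[0,1]$, $e^{-2t}\big(e^{2\lambda t}-1\big)\le 2\lambda t e^{-t}+\lambda^{t}$. *)

theory Defs
  imports Complex_Main
begin

end

theory Submission
  imports Defs
begin

text \<open>All three bounds come from comparing logarithms with linear functions: \<open>\<lambda> \<le> e\<^bsup>\<lambda>-1\<^esup>\<close>
  gives \<open>\<lambda>\<^bsup>2t\<^esup> \<le> \<lambda>\<^sup>t\<lambda> \<le> \<lambda> e\<^bsup>(\<lambda>-1)t\<^esup>\<close> on \<open>[0,1]\<close>, which yields (i) and (ii) because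
  \<open>\<lambda> - 1 \<le> -c\<close> resp. \<open>\<lambda> - 1 \<ge> -c\<close>. For (iii), the left-hand side is at most
  \<open>2\<lambda>t e\<^bsup>(2\<lambda>-2)t\<^esup>\<close> (from \<open>e\<^sup>x - 1 \<le> x e\<^sup>x\<close>), which is small for \<open>\<lambda> \<le> 1/2\<close>, and at most
  \<open>e\<^bsup>2(\<lambda>-1)t\<^esup> \<le> \<lambda>\<^sup>t\<close> for \<open>\<lambda> \<ge> 1/2\<close>, where \<open>2(\<lambda>-1) \<le> ln \<lambda>\<close>.\<close>

lemma powr_le_exp_minus_one_mult:
  fixes l t :: real
  assumes "0 \<le> l" "0 \<le> t"
  shows "l powr t \<le> exp ((l - 1) * t)"
proof -
  have "l \<le> exp (l - 1)"
    using exp_ge_add_one_self[of "l - 1"] by simp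
  hence "l powr t \<le> exp (l - 1) powr t"
    using assms by (intro powr_mono2) auto
  thus ?thesis by (simp add: exp_powr_real)
qed

lemma powr_two_mult_le_mult_exp:
  fixes l t :: real
  assumes "0 \<le> l" "l \<le> 1" "1 \<le> t"
  shows "l powr (2 * t) \<le> l * exp ((l - 1) * t)"
proof (cases "l = 0")
  case False
  hence "l powr (2 * t) = l * l powr (2 * t - 1)"
    using assms powr_add[of l 1 "2 * t - 1"] by simp
  also have "\<dots> \<le> l * l powr t"
    using assms by (intro mult_left_mono powr_mono') auto
  also have "\<dots> \<le> l * exp ((l - 1) * t)"
    using assms by (intro mult_left_mono powr_le_exp_minus_one_mult) auto
  finally show ?thesis .
qed simp

lemma exp_minus_one_le_mult_exp:
  fixes x :: real
  shows "exp x - 1 \<le> x * exp x"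
proof -
  have "exp x * (1 - x) \<le> exp x * exp (- x)"
    using exp_ge_add_one_self[of "- x"] by (intro mult_left_mono) auto
  thus ?thesis by (simp add: exp_minus_inverse algebra_simps)
qed

lemma two_mult_minus_one_le_ln:
  fixes l :: real
  assumes "1/2 \<le> l" "l \<le> 1"
  shows "2 * (l - 1) \<le> ln l"
proof -
  have "2 * (l - 1) \<le> 1 - 1 / l"
    using assms mult_nonpos_nonpos[of "l - 1" "1 - 2 * l"] by (simp add: field_simps)
  also have "\<dots> = - (1 / l - 1)"
    by simp
  also have "\<dots> \<le> ln l"
    using ln_le_minus_one[of "1 / l"] assms by (simp add: ln_div)
  finally show ?thesis .
qed

lemma exp_le_powr_of_half_le:
  fixes l t :: real
  assumes "1/2 \<le> l" "l \<le> 1" "0 \<le> t"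
  shows "exp (2 * (l - 1) * t) \<le> l powr t"
proof -
  have "2 * (l - 1) * t \<le> t * ln l"
    using two_mult_minus_one_le_ln[OF assms(1,2)] assms(3)
    by (simp add: mult.commute mult_left_mono)
  thus ?thesis using assms by (simp add: powr_def)
qed

lemma powr_two_mult_le_of_le_one_minus:
  fixes c t l :: real
  assumes "0 < c" "t \<ge> 1" "0 \<le> l" "l \<le> 1 - c"
  shows "l powr (2 * t) \<le> l * exp (- c * t)"
proof -
  have "l powr (2 * t) \<le> l * exp ((l - 1) * t)"
    using assms by (intro powr_two_mult_le_mult_exp) auto
  also have "\<dots> \<le> l * exp (- c * t)"
    using assms mult_right_mono[of "l - 1" "- c" t] by (intro mult_left_mono) auto
  finally show ?thesis .
qed

lemma powr_two_mult_le_of_one_minus_le: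
  fixes c t l :: real
  assumes "t \<ge> 1" "1 - c \<le> l" "l \<le> 1" "0 \<le> l"
  shows "l powr (2 * t) \<le> exp ((l - 1) * t) - exp (- c * t) + l * exp (- c * t)"
proof -
  have "exp (- c * t) \<le> exp ((l - 1) * t)"
    using assms mult_right_mono[of "- c" "l - 1" t] by simp
  hence "(1 - l) * exp (- c * t) \<le> (1 - l) * exp ((l - 1) * t)"
    using assms by (intro mult_left_mono) auto
  moreover have "l powr (2 * t) \<le> l * exp ((l - 1) * t)"
    using assms by (intro powr_two_mult_le_mult_exp) auto
  ultimately show ?thesis by (simp add: algebra_simps)
qed

lemma exp_diff_le_of_le_half:
  fixes t l :: real
  assumes "t \<ge> 0" "0 \<le> l" "l \<le> 1/2"
  shows "exp (- 2 * t) * (exp (2 * l * t) - 1) \<le> 2 * l * t * exp (- t)"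
proof -
  have "exp (- 2 * t) * (exp (2 * l * t) - 1) \<le> exp (- 2 * t) * (2 * l * t * exp (2 * l * t))"
    using exp_minus_one_le_mult_exp by (intro mult_left_mono) auto
  also have "\<dots> = 2 * l * t * exp ((2 * l - 2) * t)"
    by (simp add: exp_add[symmetric] algebra_simps)
  also have "\<dots> \<le> 2 * l * t * exp (- t)"
    using assms mult_right_mono[of "2 * l - 2" "- 1" t] by (intro mult_left_mono) auto
  finally show ?thesis .
qed

lemma exp_diff_le_mult_exp_plus_powr:
  fixes t l :: real
  assumes "t \<ge> 0" "0 \<le> l" "l \<le> 1"
  shows "exp (- 2 * t) * (exp (2 * l * t) - 1) \<le> 2 * l * t * exp (- t) + l powr t"
proof (cases "l \<le> 1/2")
  case True
  thus ?thesis using exp_diff_le_of_le_half[OF assms(1,2) True] powr_ge_zero[of l t] by linarith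
next
  case False
  have "exp (- 2 * t) * (exp (2 * l * t) - 1) \<le> exp (2 * (l - 1) * t)"
    by (simp add: right_diff_distrib exp_add[symmetric] algebra_simps)
  also have "\<dots> \<le> l powr t"
    using False assms by (intro exp_le_powr_of_half_le) auto
  moreover have "0 \<le> 2 * l * t * exp (- t)"
    using assms by simp
  ultimately show ?thesis by linarith
qed

theorem lemma2:
  fixes c r t :: real
  assumes "0 < c" and "c < 1" and "r = 1 - c" and "t \<ge> 1"
  shows "(\<forall>l::real. 0 \<le> l \<and> l \<le> r \<longrightarrow>
            l powr (2 * t) \<le> l * exp (- c * t))
       \<and> (\<forall>l::real. r \<le> l \<and> l \<le> 1 \<longrightarrow>
            l powr (2 * t) \<le> exp ((l - 1) * t) - exp (- c * t) + l * exp (- c * t))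
       \<and> (\<forall>l::real. 0 \<le> l \<and> l \<le> 1 \<longrightarrow>
            exp (- 2 * t) * (exp (2 * l * t) - 1) \<le> 2 * l * t * exp (- t) + l powr t)"
  using assms powr_two_mult_le_of_le_one_minus[of c t] powr_two_mult_le_of_one_minus_le[of t c] exp_diff_le_mult_exp_plus_powr[of t]
  by auto

end
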